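(* Let $X=(B\,|\,A)\in\mathbb{Z}^{d\times N}$ be a matrix of full rank $d$ in $B$-basic form, with $B\in\mathbb{Z}^{d\times d}$ a diagonal matrix of full rank with non-negative entries and $A\in\mathbb{Z}^{d\times(N-d)}$. Let $P=\{p_1,\dots,p_{N-\kappa(A)}\}$ be a coordinatizing path and $\sigma\in\{-1,1\}^{N-\kappa(A)}$. If $X'=(B\,|\,A')$ and $X''=(B\,|\,A'')$ both represent the same arithmetic matroid as $X$ and, for every $j$, the entries of $A'$ and of $A''$ at position $p_j$ both equal $\sigma_j$ times the corresponding entry of $A$, then $X'=X''$.
   Context: The arithmetic matroid represented by $X\in\mathbb{Z}^{d\times N}$ with columns $x_1,\dots,x_N$ is $([N],\operatorname{rk},m)$ where $\operatorname{rk}(S)$ is the dimension of the real span $\langle S\rangle_{\mathbb{R}}$ of $\{x_e:e\in S\}$ and $m(S)=|(\langle S\rangle_{\mathbb{R}}\cap\mathbb{Z}^d)/\langle S\rangle|$, with $\langle S\rangle$ the subgroup generated by $\{x_e:e\in S\}$. Index the columns of $A$ by $d+1,\dots,N$. Let $\mathcal{G}_A$ be the bipartite graph on vertices $\{r_1,\dots,r_d\}\cup\{c_{d+1},\dots,c_N\}$ with an edge $\{r_i,c_j\}$ iff $a_{ij}\ne 0$; edges are identified with the non-zero entries of $A$. $\kappa(A)$ is the number of connected components of $\mathcal{G}_A$. A coordinatizing path is the set of entries of $A$ corresponding to the edges of a spanning forest of $\mathcal{G}_A$. *)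

theory Defs
  imports "HOL-Analysis.Analysis"
begin

text \<open>Rows are indexed by a finite type 'd (so d = CARD('d)); the columns of B are
  indexed by 'd, the columns of A by a finite type 'a (so N - d = CARD('a)).\<close>

definition blockmat :: "('d \<Rightarrow> 'd \<Rightarrow> int) \<Rightarrow> ('d \<Rightarrow> 'a \<Rightarrow> int) \<Rightarrow> 'd \<Rightarrow> ('d + 'a) \<Rightarrow> int" where
  "blockmat B A = (\<lambda>i e. case e of Inl k \<Rightarrow> B i k | Inr j \<Rightarrow> A i j)"

definition colR :: "('d::finite \<Rightarrow> 'e \<Rightarrow> int) \<Rightarrow> 'e \<Rightarrow> real ^ 'd" where
  "colR X e = (\<chi> i. real_of_int (X i e))"

definition int_lattice :: "(real ^ 'd::finite) set" where
  "int_lattice = {v. \<forall>i. v $ i \<in> \<int>}"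

definition int_gen :: "('d::finite \<Rightarrow> 'e \<Rightarrow> int) \<Rightarrow> 'e set \<Rightarrow> (real ^ 'd) set" where
  "int_gen X S = {v. \<exists>T c. finite T \<and> T \<subseteq> S \<and> v = (\<Sum>e\<in>T. of_int (c e) *\<^sub>R colR X e)}"

definition mrk :: "('d::finite \<Rightarrow> 'e \<Rightarrow> int) \<Rightarrow> 'e set \<Rightarrow> nat" where
  "mrk X S = dim (span (colR X ` S))"

text \<open>Multiplicity: cardinality of the quotient group (span_R(S) \<inter> Z^d) / <S>,
  i.e. the number of cosets of <S> in span_R(S) \<inter> Z^d.\<close>
definition mult :: "('d::finite \<Rightarrow> 'e \<Rightarrow> int) \<Rightarrow> 'e set \<Rightarrow> nat" where
  "mult X S = card ((\<lambda>v. (\<lambda>w. v + w) ` int_gen X S) ` (span (colR X ` S) \<inter> int_lattice))"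

definition same_arith_matroid :: "('d::finite \<Rightarrow> 'e \<Rightarrow> int) \<Rightarrow> ('d \<Rightarrow> 'e \<Rightarrow> int) \<Rightarrow> bool" where
  "same_arith_matroid X Y \<longleftrightarrow> (\<forall>S. mrk X S = mrk Y S \<and> mult X S = mult Y S)"

text \<open>Bipartite graph G_A: vertices Inl i = r_i and Inr j = c_j; edges are identified
  with the positions (i,j) of nonzero entries of A.\<close>
definition graph_edges :: "('d \<Rightarrow> 'a \<Rightarrow> int) \<Rightarrow> ('d \<times> 'a) set" where
  "graph_edges A = {(i, j). A i j \<noteq> 0}"

definition adj :: "('d \<times> 'a) set \<Rightarrow> 'd + 'a \<Rightarrow> 'd + 'a \<Rightarrow> bool" where
  "adj F u v \<longleftrightarrow> (\<exists>i j. (i, j) \<in> F \<and> ((u = Inl i \<and> v = Inr j) \<or> (u = Inr j \<and> v = Inl i)))"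

definition connected_in :: "('d \<times> 'a) set \<Rightarrow> 'd + 'a \<Rightarrow> 'd + 'a \<Rightarrow> bool" where
  "connected_in F u v \<longleftrightarrow> (u, v) \<in> {(x, y). adj F x y}\<^sup>*"

definition has_cycle :: "('d \<times> 'a) set \<Rightarrow> bool" where
  "has_cycle F \<longleftrightarrow> (\<exists>vs. length vs \<ge> 3 \<and> distinct vs \<and>
      (\<forall>k < length vs - 1. adj F (vs ! k) (vs ! Suc k)) \<and> adj F (last vs) (hd vs))"

text \<open>Coordinatizing path: the edges of a spanning forest of G_A.\<close>
definition coordinatizing_path :: "('d \<Rightarrow> 'a \<Rightarrow> int) \<Rightarrow> ('d \<times> 'a) set \<Rightarrow> bool" where
  "coordinatizing_path A P \<longleftrightarrow> P \<subseteq> graph_edges A \<and> \<not> has_cycle P \<and>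
      (\<forall>u v. connected_in P u v \<longleftrightarrow> connected_in (graph_edges A) u v)"

end

(*
  The multiplicity of a set of d independent columns is the index in Z^d of the lattice they
  span; bringing the matrix to diagonal form by unimodular row and column operations shows that
  this index is the absolute value of the determinant. So X, X' and X'' have the same maximal
  minors up to sign. Exchanging one column of the diagonal block B for a column of A then gives
  |A'| = |A| = |A''| entrywise. If A' and A'' differ, split the support of A into the entries F
  where they agree, which contain the path P, and the entries H where they have opposite signs.
  A shortest walk through F joining the ends of an edge of H closes, with that edge, a chordless
  cycle. The minor taking the columns of A on this cycle in place of the corresponding columns
  of B is the product of the remaining diagonal entries of B times a sum of the two products
  along the cycle; flipping the sign of the closing entry alone turns this sum into a difference
  and so changes the absolute value of the minor, a contradiction.
*)

theory Submission
  imports Defs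
begin

section \<open>Lattice index and determinant\<close>

definition lattice_of :: "int^'n^'n \<Rightarrow> (int^'n) set" where
  "lattice_of M = range (\<lambda>c. M *v c)"

text \<open>For singular M the quotient is infinite and the index is 0.\<close>

definition lattice_index :: "int^'n^'n \<Rightarrow> nat" where
  "lattice_index M = card (range (\<lambda>v. (+) v ` lattice_of M))"

lemma lattice_of_add: "x \<in> lattice_of M \<Longrightarrow> y \<in> lattice_of M \<Longrightarrow> x + y \<in> lattice_of M"
  unfolding lattice_of_def by (auto simp: image_iff matrix_vector_right_distrib[symmetric])

lemma lattice_of_diff: "x \<in> lattice_of M \<Longrightarrow> y \<in> lattice_of M \<Longrightarrow> x - y \<in> lattice_of M"
  unfolding lattice_of_def by (auto simp: image_iff matrix_vector_mult_diff_distrib[symmetric])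

lemma zero_in_lattice_of: "0 \<in> lattice_of M"
  unfolding lattice_of_def by (auto simp: image_iff intro: exI[of _ 0])

lemma coset_eq_iff: "(+) v ` lattice_of M = (+) w ` lattice_of M \<longleftrightarrow> v - w \<in> lattice_of M"
proof
  assume "(+) v ` lattice_of M = (+) w ` lattice_of M"
  then have "v \<in> (+) w ` lattice_of M"
    using zero_in_lattice_of[of M] by (metis add.right_neutral image_eqI)
  then show "v - w \<in> lattice_of M" by auto
next
  assume vw: "v - w \<in> lattice_of M"
  have "(+) v ` lattice_of M \<subseteq> (+) w ` lattice_of M" if "v - w \<in> lattice_of M" for v w
  proof
    fix x assume "x \<in> (+) v ` lattice_of M"
    then obtain y where "y \<in> lattice_of M" "x = w + ((v - w) + y)" by auto
    then show "x \<in> (+) w ` lattice_of M" using lattice_of_add[OF that] by blast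
  qed
  moreover have "w - v \<in> lattice_of M"
    using lattice_of_diff[OF zero_in_lattice_of vw] by simp
  ultimately show "(+) v ` lattice_of M = (+) w ` lattice_of M" using vw by blast
qed

lemma card_range_eq_if_same_fibres:
  assumes "\<And>x y. f x = f y \<longleftrightarrow> g x = g y"
  shows "card (range f) = card (range g)"
proof -
  let ?h = "\<lambda>y. f (inv g y)"
  have "range f = ?h ` range g"
    using assms by (auto simp: image_iff f_inv_into_f)
  moreover have "inj_on ?h (range g)"
    using assms by (auto intro!: inj_onI simp: f_inv_into_f)
  ultimately show ?thesis by (simp add: card_image)
qed

definition unimodular_equiv :: "int^'n^'n \<Rightarrow> int^'n^'n \<Rightarrow> bool" where
  "unimodular_equiv M N \<longleftrightarrow> (\<exists>E F. invertible E \<and> invertible F \<and> N = E ** M ** F)"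

lemma invertible_mat_1: "invertible (mat 1 :: 'a::semiring_1^'n^'n)"
  unfolding invertible_def by (auto intro: exI[of _ "mat 1"])

lemma invertible_transpose:
  fixes A :: "'a::comm_semiring_1^'n^'n"
  assumes "invertible A" shows "invertible (transpose A)"
  using assms unfolding invertible_def by (metis matrix_transpose_mul transpose_mat)

lemma unimodular_equiv_refl: "unimodular_equiv M M"
  unfolding unimodular_equiv_def using invertible_mat_1 by (metis matrix_mul_lid matrix_mul_rid)

lemma unimodular_equiv_trans:
  "unimodular_equiv M N \<Longrightarrow> unimodular_equiv N P \<Longrightarrow> unimodular_equiv M P"
  unfolding unimodular_equiv_def by (metis invertible_mult matrix_mul_assoc)

lemma unimodular_equiv_mult_right: "invertible F \<Longrightarrow> unimodular_equiv M (M ** F)"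
  unfolding unimodular_equiv_def using invertible_mat_1 by (metis matrix_mul_lid)

lemma unimodular_equiv_transpose:
  "unimodular_equiv M N \<Longrightarrow> unimodular_equiv (transpose M) (transpose N)"
  unfolding unimodular_equiv_def
  by (metis invertible_transpose matrix_mul_assoc matrix_transpose_mul)

lemma lattice_of_mult_invertible_right:
  assumes "invertible F" shows "lattice_of (M ** F) = lattice_of M"
proof -
  obtain F' where F': "F ** F' = mat 1" using assms unfolding invertible_def by blast
  have "(M ** F) *v c = M *v (F *v c)" for c by (simp add: matrix_vector_mul_assoc)
  moreover have "M *v c = (M ** F) *v (F' *v c)" for c
    by (metis F' matrix_vector_mul_assoc matrix_vector_mul_lid)
  ultimately show ?thesis unfolding lattice_of_def by (metis (no_types, lifting) rangeI subset_antisym image_subset_iff)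
qed

lemma lattice_index_mult_invertible_left:
  assumes "invertible E" shows "lattice_index (E ** M) = lattice_index M"
proof -
  obtain E' where E': "E ** E' = mat 1" "E' ** E = mat 1" using assms unfolding invertible_def by blast
  have inj: "inj ((*v) E)" and surj: "surj ((*v) E)"
    using E' by (metis injI matrix_vector_mul_assoc matrix_vector_mul_lid, metis surjI matrix_vector_mul_assoc matrix_vector_mul_lid)
  have lat: "lattice_of (E ** M) = (*v) E ` lattice_of M"
    unfolding lattice_of_def by (simp add: image_image matrix_vector_mul_assoc)
  have "E *v u - E *v u' \<in> lattice_of (E ** M) \<longleftrightarrow> u - u' \<in> lattice_of M" for u u'
    unfolding lat matrix_vector_mult_diff_distrib[symmetric] using inj by (auto simp: inj_image_mem_iff)
  then have "card (range (\<lambda>u. (+) (E *v u) ` lattice_of (E ** M))) = lattice_index M"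
    unfolding lattice_index_def by (intro card_range_eq_if_same_fibres) (simp add: coset_eq_iff)
  moreover have "range (\<lambda>u. (+) (E *v u) ` lattice_of (E ** M)) = range (\<lambda>v. (+) v ` lattice_of (E ** M))"
    using image_image[of "\<lambda>v. (+) v ` lattice_of (E ** M)" "(*v) E" UNIV] surj by simp
  ultimately show ?thesis unfolding lattice_index_def by simp
qed

lemma lattice_index_unimodular_equiv:
  assumes "unimodular_equiv M N" shows "lattice_index N = lattice_index M"
proof -
  obtain E F where "invertible E" "invertible F" "N = E ** (M ** F)"
    using assms unfolding unimodular_equiv_def by (auto simp: matrix_mul_assoc)
  then show ?thesis
    using lattice_index_mult_invertible_left[of E "M ** F"]
    by (simp add: lattice_index_def lattice_of_mult_invertible_right)
qed

lemma abs_det_invertible: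
  assumes "invertible (E :: int^'n^'n)" shows "\<bar>det E\<bar> = 1"
proof -
  obtain E' where "E ** E' = mat 1" using assms unfolding invertible_def by blast
  then have "\<bar>det E * det E'\<bar> = 1" by (metis det_I det_mul abs_one)
  then show ?thesis by (rule abs_zmult_eq_1)
qed

lemma abs_det_unimodular_equiv: "unimodular_equiv M N \<Longrightarrow> \<bar>det N\<bar> = \<bar>det M\<bar>"
  unfolding unimodular_equiv_def by (auto simp: det_mul abs_mult abs_det_invertible)

definition transvection :: "'n \<Rightarrow> ('n \<Rightarrow> int) \<Rightarrow> int^'n^'n" where
  "transvection l q = (\<chi> i j. if i = j then 1 else if i = l then q j else 0)"

definition perm_matrix :: "('n \<Rightarrow> 'n) \<Rightarrow> int^'n^'n" where
  "perm_matrix p = (\<chi> i j. if i = p j then 1 else 0)"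

lemma matrix_mul_transvection:
  "(M ** transvection l q) $ r $ j = M $ r $ j + (if j = l then 0 else M $ r $ l * q j)"
proof -
  have "M $ r $ k * transvection l q $ k $ j
      = (if k = j then M $ r $ k else 0) + (if k = l then (if j = l then 0 else M $ r $ k * q j) else 0)" for k
    by (auto simp: transvection_def)
  then have "(M ** transvection l q) $ r $ j
      = (\<Sum>k\<in>UNIV. (if k = j then M $ r $ k else 0) + (if k = l then (if j = l then 0 else M $ r $ k * q j) else 0))"
    by (simp add: matrix_matrix_mult_def)
  then show ?thesis by (simp only: sum.distrib) simp
qed

lemma transvection_mul_inverse: "transvection l q ** transvection l (\<lambda>j. - q j) = mat 1"
proof -
  have "(transvection l q ** transvection l (\<lambda>j. - q j)) $ r $ j = mat 1 $ r $ j" for r j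
    unfolding matrix_mul_transvection
    by (cases "r = l"; cases "j = l"; cases "r = j") (simp_all add: transvection_def mat_def)
  then show ?thesis by (simp add: vec_eq_iff)
qed

lemma invertible_transvection: "invertible (transvection l q)"
  unfolding invertible_def using transvection_mul_inverse[of l q] transvection_mul_inverse[of l "\<lambda>j. - q j"]
  by auto

lemma matrix_mul_perm_matrix: "(M ** perm_matrix p) $ r $ j = M $ r $ p j"
  unfolding matrix_matrix_mult_def perm_matrix_def by (simp add: if_distrib[of "(*) _"] cong: if_cong)

lemma invertible_perm_matrix:
  assumes "p permutes UNIV" shows "invertible (perm_matrix p)"
proof -
  have "perm_matrix p ** perm_matrix (inv p) = mat 1" "perm_matrix (inv p) ** perm_matrix p = mat 1"
    unfolding vec_eq_iff matrix_mul_perm_matrix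
    by (auto simp: perm_matrix_def mat_def permutes_inverses[OF assms])
  then show ?thesis unfolding invertible_def by blast
qed

lemma lattice_of_diagonal:
  assumes diag: "\<And>i j. i \<noteq> j \<Longrightarrow> D $ i $ j = 0"
  shows "lattice_of D = {v. \<forall>i. D $ i $ i dvd v $ i}"
proof -
  have mult: "(D *v c) $ i = D $ i $ i * c $ i" for c i
  proof -
    have "(D *v c) $ i = (\<Sum>j\<in>UNIV. if j = i then D $ i $ j * c $ j else 0)"
      unfolding matrix_vector_mult_def vec_lambda_beta using diag by (intro sum.cong) auto
    then show ?thesis by simp
  qed
  show ?thesis
  proof (intro set_eqI iffI)
    fix v assume "v \<in> {v. \<forall>i. D $ i $ i dvd v $ i}"
    then have "D *v (\<chi> i. v $ i div D $ i $ i) = v" by (simp add: vec_eq_iff mult)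
    then show "v \<in> lattice_of D" unfolding lattice_of_def by (metis rangeI)
  qed (auto simp: lattice_of_def mult)
qed

lemma lattice_index_diagonal:
  assumes diag: "\<And>i j. i \<noteq> j \<Longrightarrow> D $ i $ j = 0" and nz: "\<And>i. D $ i $ i \<noteq> 0"
  shows "int (lattice_index D) = (\<Prod>i\<in>UNIV. \<bar>D $ i $ i\<bar>)"
proof -
  define residue where "residue v = (\<chi> i. v $ i mod \<bar>D $ i $ i\<bar>)" for v
  define box where "box = {r. \<forall>i. 0 \<le> r $ i \<and> r $ i < \<bar>D $ i $ i\<bar>}"
  have "(+) v ` lattice_of D = (+) w ` lattice_of D \<longleftrightarrow> residue v = residue w" for v w
  proof -
    have "v - w \<in> lattice_of D \<longleftrightarrow> (\<forall>i. D $ i $ i dvd v $ i - w $ i)"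
      using lattice_of_diagonal[OF diag] by simp
    then show ?thesis unfolding coset_eq_iff by (simp add: residue_def vec_eq_iff mod_eq_dvd_iff)
  qed
  then have "lattice_index D = card (range residue)"
    unfolding lattice_index_def by (rule card_range_eq_if_same_fibres)
  also have "range residue = box"
  proof (intro set_eqI iffI)
    fix r assume "r \<in> box"
    then have "residue r = r" by (simp add: box_def residue_def vec_eq_iff)
    then show "r \<in> range residue" by (metis rangeI)
  qed (use nz in \<open>auto simp: box_def residue_def\<close>)
  also have "box = vec_lambda ` (PiE UNIV (\<lambda>i. {0..<\<bar>D $ i $ i\<bar>}))"
  proof (intro set_eqI iffI)
    fix r assume "r \<in> box"
    then show "r \<in> vec_lambda ` (PiE UNIV (\<lambda>i. {0..<\<bar>D $ i $ i\<bar>}))"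
      by (intro image_eqI[of _ _ "vec_nth r"]) (auto simp: box_def PiE_iff)
  qed (auto simp: box_def PiE_iff)
  also have "card \<dots> = (\<Prod>i\<in>UNIV. nat \<bar>D $ i $ i\<bar>)"
    by (subst card_image) (auto simp: inj_on_def vec_lambda_inject card_PiE)
  finally show ?thesis by simp
qed

definition off_diagonal_within :: "'n set \<Rightarrow> int^'n^'n \<Rightarrow> bool" where
  "off_diagonal_within K M \<longleftrightarrow> (\<forall>i j. M $ i $ j \<noteq> 0 \<longrightarrow> i = j \<or> (i \<in> K \<and> j \<in> K))"

lemma off_diagonal_within_transpose:
  "off_diagonal_within K (transpose M) \<longleftrightarrow> off_diagonal_within K M"
  unfolding off_diagonal_within_def transpose_def by auto

lemma off_diagonal_within_mult_transvection:
  assumes M: "off_diagonal_within K M" and "l \<in> K" and q: "\<And>j. j \<notin> K \<Longrightarrow> q j = 0"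
  shows "off_diagonal_within K (M ** transvection l q)"
  unfolding off_diagonal_within_def
proof (intro allI impI)
  fix r j assume "(M ** transvection l q) $ r $ j \<noteq> 0"
  then have "M $ r $ j \<noteq> 0 \<or> (M $ r $ l \<noteq> 0 \<and> q j \<noteq> 0)"
    by (auto simp: matrix_mul_transvection split: if_splits)
  then show "r = j \<or> (r \<in> K \<and> j \<in> K)" using M \<open>l \<in> K\<close> q unfolding off_diagonal_within_def by blast
qed

lemma reduce_entry_in_row:
  assumes M: "off_diagonal_within K M" and K: "i \<in> K" "l \<in> K" "l' \<in> K"
    and a: "M $ i $ l \<noteq> 0" and ndvd: "\<not> M $ i $ l dvd M $ i $ l'"
  shows "\<exists>N. off_diagonal_within K N \<and> unimodular_equiv M N \<and> N $ i $ l' \<noteq> 0 \<and> \<bar>N $ i $ l'\<bar> < \<bar>M $ i $ l\<bar>"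
proof -
  define N where "N = M ** transvection l (\<lambda>j. if j = l' then - (M $ i $ l' div M $ i $ l) else 0)"
  have N: "N $ r $ j = M $ r $ j + (if j = l' \<and> j \<noteq> l then - M $ r $ l * (M $ i $ l' div M $ i $ l) else 0)" for r j
    unfolding N_def matrix_mul_transvection by auto
  have "l' \<noteq> l" using ndvd by auto
  then have Nil': "N $ i $ l' = M $ i $ l' mod M $ i $ l"
    by (simp add: N minus_mult_div_eq_mod[symmetric])
  have "off_diagonal_within K N"
    unfolding N_def using K by (intro off_diagonal_within_mult_transvection[OF M]) auto
  moreover have "unimodular_equiv M N"
    unfolding N_def by (rule unimodular_equiv_mult_right[OF invertible_transvection])
  moreover have "N $ i $ l' \<noteq> 0" using ndvd by (simp add: Nil' dvd_eq_mod_eq_0)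
  moreover have "\<bar>N $ i $ l'\<bar> < \<bar>M $ i $ l\<bar>" using a by (simp add: Nil' abs_mod_less)
  ultimately show ?thesis by blast
qed

lemma clear_row:
  assumes M: "off_diagonal_within K M" and K: "i \<in> K" "l \<in> K"
    and dvd: "\<And>j. j \<in> K \<Longrightarrow> M $ i $ l dvd M $ i $ j"
  shows "\<exists>N. off_diagonal_within K N \<and> unimodular_equiv M N \<and>
    (\<forall>j. N $ i $ j = (if j = l then M $ i $ l else 0)) \<and> (\<forall>r. N $ r $ l = M $ r $ l)"
proof -
  define N where "N = M ** transvection l (\<lambda>j. if j \<in> K then - (M $ i $ j div M $ i $ l) else 0)"
  have N: "N $ r $ j = M $ r $ j + (if j \<in> K \<and> j \<noteq> l then - M $ r $ l * (M $ i $ j div M $ i $ l) else 0)" for r j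
    unfolding N_def matrix_mul_transvection by auto
  have "off_diagonal_within K N"
    unfolding N_def using K by (intro off_diagonal_within_mult_transvection[OF M]) auto
  moreover have "unimodular_equiv M N"
    unfolding N_def by (rule unimodular_equiv_mult_right[OF invertible_transvection])
  moreover have "N $ i $ j = (if j = l then M $ i $ l else 0)" for j
  proof (cases "j \<in> K")
    case True
    then show ?thesis using dvd[OF True] by (auto simp: N)
  next
    case False
    then show ?thesis using M K unfolding off_diagonal_within_def by (auto simp: N)
  qed
  moreover have "N $ r $ l = M $ r $ l" for r by (simp add: N)
  ultimately show ?thesis by blast
qed

lemma isolated_entry_to_diagonal:
  assumes M: "off_diagonal_within K M" and K: "i \<in> K" "l \<in> K"
    and row: "\<And>j. M $ l $ j = (if j = i then a else 0)" and col: "\<And>r. M $ r $ i = (if r = l then a else 0)"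
  shows "\<exists>N. off_diagonal_within (K - {l}) N \<and> unimodular_equiv M N"
proof -
  define \<tau> where "\<tau> = Transposition.transpose i l"
  define N where "N = M ** perm_matrix \<tau>"
  have N: "N $ r $ j = M $ r $ \<tau> j" for r j by (simp add: N_def matrix_mul_perm_matrix)
  have \<tau>: "\<tau> j = (if j = i then l else if j = l then i else j)" for j
    by (simp add: \<tau>_def Transposition.transpose_def)
  have "off_diagonal_within (K - {l}) N"
    unfolding off_diagonal_within_def
  proof (intro allI impI)
    fix r j assume "N $ r $ j \<noteq> 0"
    then have nz: "M $ r $ \<tau> j \<noteq> 0" by (simp add: N)
    consider "r = l" | "j = l" | "r \<noteq> l" "j \<noteq> l" by blast
    then show "r = j \<or> (r \<in> K - {l} \<and> j \<in> K - {l})"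
    proof cases
      case 1
      then show ?thesis using nz row[of "\<tau> j"] \<tau>[of j] by (auto split: if_splits)
    next
      case 2
      then show ?thesis using nz col[of r] \<tau>[of j] by (auto split: if_splits)
    next
      case 3
      have "r = \<tau> j \<or> (r \<in> K \<and> \<tau> j \<in> K)" using nz M unfolding off_diagonal_within_def by blast
      then show ?thesis using 3 K \<tau>[of j] by (auto split: if_splits)
    qed
  qed
  moreover have "\<tau> permutes UNIV" unfolding \<tau>_def by (rule permutes_swap_id) auto
  then have "unimodular_equiv M N"
    unfolding N_def by (intro unimodular_equiv_mult_right invertible_perm_matrix)
  ultimately show ?thesis by blast
qed

lemma clear_row_and_column:
  assumes M: "off_diagonal_within K M" and K: "i \<in> K" "l \<in> K"
    and row_dvd: "\<And>j. j \<in> K \<Longrightarrow> M $ i $ l dvd M $ i $ j"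
    and col_dvd: "\<And>r. r \<in> K \<Longrightarrow> M $ i $ l dvd M $ r $ l"
  shows "\<exists>N. off_diagonal_within (K - {l}) N \<and> unimodular_equiv M N"
proof -
  obtain M1 where M1: "off_diagonal_within K M1" "unimodular_equiv M M1"
    and row1: "\<And>j. M1 $ i $ j = (if j = l then M $ i $ l else 0)" and col1: "\<And>r. M1 $ r $ l = M $ r $ l"
    using clear_row[OF M K row_dvd] by blast
  \<comment> \<open>Clearing column l of M1 is clearing row l of its transpose, which leaves row i of M1 alone.\<close>
  let ?T = "transpose M1"
  have T_row: "?T $ l $ j = M $ j $ l" and T_col: "?T $ r $ i = (if r = l then M $ i $ l else 0)" for j r
    by (simp_all add: transpose_def row1 col1)
  have "off_diagonal_within K ?T" using M1(1) by (simp add: off_diagonal_within_transpose)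
  moreover have "?T $ l $ i dvd ?T $ l $ j" if "j \<in> K" for j
    using col_dvd[OF that] by (simp add: T_row)
  ultimately obtain M2 where M2: "off_diagonal_within K M2" "unimodular_equiv ?T M2"
    and row2: "\<forall>j. M2 $ l $ j = (if j = i then ?T $ l $ i else 0)" and col2: "\<forall>r. M2 $ r $ i = ?T $ r $ i"
    using clear_row[of K ?T l i] K by blast
  have "M2 $ l $ j = (if j = i then M $ i $ l else 0)" "M2 $ r $ i = (if r = l then M $ i $ l else 0)" for j r
    using row2 col2 by (simp_all add: T_row T_col)
  then obtain N where N: "off_diagonal_within (K - {l}) N" "unimodular_equiv M2 N"
    using isolated_entry_to_diagonal[OF M2(1) K] by blast
  have "unimodular_equiv M1 (transpose N)"
    using unimodular_equiv_transpose[OF unimodular_equiv_trans[OF M2(2) N(2)]] by simp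
  then have "unimodular_equiv M (transpose N)" by (rule unimodular_equiv_trans[OF M1(2)])
  then show ?thesis using N(1) by (metis off_diagonal_within_transpose)
qed

lemma reduce_off_diagonal:
  assumes "off_diagonal_within K M" "i \<in> K" "l \<in> K" "M $ i $ l \<noteq> 0"
  shows "\<exists>N k. k \<in> K \<and> off_diagonal_within (K - {k}) N \<and> unimodular_equiv M N"
  using assms
  \<comment> \<open>Euclid's algorithm: an entry of row i or column l not divisible by M i l is replaced by
    its remainder, which is smaller; once all are divisible, row i and column l can be cleared.\<close>
proof (induction "nat \<bar>M $ i $ l\<bar>" arbitrary: M i l rule: less_induct)
  case less
  note M = less.prems(1) and K = less.prems(2,3) and a = less.prems(4)
  consider (row) l' where "l' \<in> K" "\<not> M $ i $ l dvd M $ i $ l'"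
    | (col) i' where "i' \<in> K" "\<not> M $ i $ l dvd M $ i' $ l"
    | (dvd) "\<And>j. j \<in> K \<Longrightarrow> M $ i $ l dvd M $ i $ j" "\<And>r. r \<in> K \<Longrightarrow> M $ i $ l dvd M $ r $ l"
    by blast
  then show ?case
  proof cases
    case row
    obtain N where N: "off_diagonal_within K N" "unimodular_equiv M N" "N $ i $ l' \<noteq> 0" "\<bar>N $ i $ l'\<bar> < \<bar>M $ i $ l\<bar>"
      using reduce_entry_in_row[OF M K row(1) a row(2)] by blast
    have "nat \<bar>N $ i $ l'\<bar> < nat \<bar>M $ i $ l\<bar>" using N(3,4) by simp
    then show ?thesis
      using less.hyps[OF _ N(1) K(1) row(1) N(3)] unimodular_equiv_trans[OF N(2)] by blast
  next
    case col
    have "off_diagonal_within K (transpose M)" using M by (simp add: off_diagonal_within_transpose)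
    then obtain N where N: "off_diagonal_within K N" "unimodular_equiv (transpose M) N"
      "N $ l $ i' \<noteq> 0" "\<bar>N $ l $ i'\<bar> < \<bar>M $ i $ l\<bar>"
      using reduce_entry_in_row[of K "transpose M" l i i'] K col a by (auto simp: transpose_def)
    have N': "off_diagonal_within K (transpose N)" "unimodular_equiv M (transpose N)"
      "transpose N $ i' $ l = N $ l $ i'"
      using N(1) unimodular_equiv_transpose[OF N(2)]
      by (simp_all add: off_diagonal_within_transpose) (simp add: transpose_def)
    have "nat \<bar>transpose N $ i' $ l\<bar> < nat \<bar>M $ i $ l\<bar>" using N(3,4) N'(3) by simp
    then show ?thesis
      using less.hyps[OF _ N'(1) col(1) K(2)] N'(3) N(3) unimodular_equiv_trans[OF N'(2)] by auto
  next
    case dvd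
    then show ?thesis using clear_row_and_column[OF M K] K by blast
  qed
qed

lemma diagonal_form_exists:
  assumes "det M \<noteq> 0" "off_diagonal_within K M"
  shows "\<exists>D. (\<forall>i j. i \<noteq> j \<longrightarrow> D $ i $ j = 0) \<and> unimodular_equiv M D"
  using assms
proof (induction "card K" arbitrary: K M rule: less_induct)
  case less
  show ?case
  proof (cases "K = {}")
    case True
    then show ?thesis using less.prems(2) unimodular_equiv_refl unfolding off_diagonal_within_def by blast
  next
    case False
    then obtain i where i: "i \<in> K" by blast
    have "row i M \<noteq> 0" using less.prems(1) det_zero_row(1) by blast
    then obtain l where l: "M $ i $ l \<noteq> 0" by (auto simp: row_def vec_eq_iff)
    then have "l \<in> K" using less.prems(2) i unfolding off_diagonal_within_def by blast
    then obtain N k where N: "k \<in> K" "off_diagonal_within (K - {k}) N" "unimodular_equiv M N"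
      using reduce_off_diagonal[OF less.prems(2) i _ l] by blast
    moreover have "det N \<noteq> 0" using abs_det_unimodular_equiv[OF N(3)] less.prems(1) by auto
    moreover have "card (K - {k}) < card K" using N(1) by (intro card_Diff1_less) auto
    ultimately show ?thesis using less.hyps unimodular_equiv_trans by meson
  qed
qed

theorem lattice_index_eq_abs_det:
  assumes "det M \<noteq> 0" shows "int (lattice_index M) = \<bar>det M\<bar>"
proof -
  obtain D where diag: "\<forall>i j. i \<noteq> j \<longrightarrow> D $ i $ j = 0" and MD: "unimodular_equiv M D"
    using diagonal_form_exists[OF assms, of UNIV] by (auto simp: off_diagonal_within_def)
  have det_D: "det D = (\<Prod>i\<in>UNIV. D $ i $ i)" using diag by (simp add: det_diagonal)
  have "(\<Prod>i\<in>UNIV. D $ i $ i) \<noteq> 0"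
    by (metis abs_eq_0 abs_det_unimodular_equiv[OF MD] assms det_D)
  then have "D $ i $ i \<noteq> 0" for i by simp
  then have "int (lattice_index D) = (\<Prod>i\<in>UNIV. \<bar>D $ i $ i\<bar>)"
    using diag by (intro lattice_index_diagonal) auto
  then have "int (lattice_index D) = \<bar>det D\<bar>" by (simp add: det_D abs_prod)
  then show ?thesis using MD by (simp add: lattice_index_unimodular_equiv abs_det_unimodular_equiv)
qed

section \<open>Multiplicity of a basis\<close>

definition column_submatrix :: "('d::finite \<Rightarrow> 'e \<Rightarrow> int) \<Rightarrow> ('d \<Rightarrow> 'e) \<Rightarrow> int^'d^'d" where
  "column_submatrix X g = (\<chi> i l. X i (g l))"

definition of_int_vec :: "int^'d::finite \<Rightarrow> real^'d" where
  "of_int_vec v = (\<chi> i. real_of_int (v $ i))"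

lemma mrk_range_eq_card_iff:
  fixes X :: "'d::finite \<Rightarrow> 'e \<Rightarrow> int"
  shows "mrk X (range g) = CARD('d) \<longleftrightarrow> det (column_submatrix X g) \<noteq> 0"
proof -
  let ?Y = "(\<chi> i l. real_of_int (X i (g l))) :: real^'d^'d"
  have "columns ?Y = colR X ` range g"
    unfolding columns_def column_def colR_def by auto
  then have "rank ?Y = mrk X (range g)"
    unfolding column_rank_def mrk_def by simp
  moreover have "det ?Y = of_int (det (column_submatrix X g))"
    unfolding det_def column_submatrix_def by simp
  moreover have "rank ?Y \<le> CARD('d)" using rank_bound[of ?Y] by simp
  ultimately show ?thesis using det_eq_0_rank[of ?Y] by auto
qed

lemma of_int_vec_column_submatrix_mult:
  "of_int_vec (column_submatrix X g *v c) = (\<Sum>l\<in>UNIV. of_int (c $ l) *\<^sub>R colR X (g l))"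
  by (simp add: vec_eq_iff of_int_vec_def column_submatrix_def matrix_vector_mult_def colR_def
      mult.commute)

lemma int_gen_range:
  fixes X :: "'d::finite \<Rightarrow> 'e \<Rightarrow> int"
  assumes "inj g"
  shows "int_gen X (range g) = of_int_vec ` lattice_of (column_submatrix X g)"
proof (intro set_eqI iffI)
  fix v assume "v \<in> int_gen X (range g)"
  then obtain T c where T: "T \<subseteq> range g" and v: "v = (\<Sum>e\<in>T. of_int (c e) *\<^sub>R colR X e)"
    unfolding int_gen_def by blast
  let ?f = "\<lambda>e. of_int (c e) *\<^sub>R colR X e"
  have "v = sum ?f (g ` (g -` T))" using T v by (simp add: Int_absorb2)
  also have "\<dots> = (\<Sum>l\<in>g -` T. ?f (g l))"
    by (simp only: sum.reindex[OF inj_on_subset[OF assms subset_UNIV]] comp_def)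
  also have "\<dots> = (\<Sum>l\<in>UNIV. if g l \<in> T then ?f (g l) else 0)"
    by (simp add: sum.If_cases vimage_def)
  also have "\<dots> = (\<Sum>l\<in>UNIV. of_int ((\<chi> l. if g l \<in> T then c (g l) else 0) $ l) *\<^sub>R colR X (g l))"
    by (intro sum.cong) auto
  also have "\<dots> \<in> of_int_vec ` lattice_of (column_submatrix X g)"
    unfolding lattice_of_def of_int_vec_column_submatrix_mult[symmetric] by blast
  finally show "v \<in> of_int_vec ` lattice_of (column_submatrix X g)" .
next
  fix v assume "v \<in> of_int_vec ` lattice_of (column_submatrix X g)"
  then obtain c where v: "v = of_int_vec (column_submatrix X g *v c)"
    unfolding lattice_of_def by blast
  have "v = (\<Sum>e\<in>range g. of_int (c $ inv g e) *\<^sub>R colR X e)"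
    unfolding v of_int_vec_column_submatrix_mult
    using sum.reindex[OF assms, of "\<lambda>e. of_int (c $ inv g e) *\<^sub>R colR X e"] by (simp add: assms)
  then show "v \<in> int_gen X (range g)"
    unfolding int_gen_def by (intro CollectI exI[of _ "range g"] exI[of _ "\<lambda>e. c $ inv g e"] conjI) simp_all
qed

lemma int_lattice_eq_range_of_int_vec: "int_lattice = range of_int_vec"
proof (intro set_eqI iffI)
  fix v :: "real^'d" assume "v \<in> int_lattice"
  then have "v = of_int_vec (\<chi> i. \<lfloor>v $ i\<rfloor>)" by (simp add: vec_eq_iff of_int_vec_def int_lattice_def)
  then show "v \<in> range of_int_vec" by blast
qed (auto simp: int_lattice_def of_int_vec_def)

theorem mult_range_eq_abs_det:
  fixes X :: "'d::finite \<Rightarrow> 'e \<Rightarrow> int"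
  assumes "inj g" and "det (column_submatrix X g) \<noteq> 0"
  shows "int (mult X (range g)) = \<bar>det (column_submatrix X g)\<bar>"
proof -
  let ?L = "lattice_of (column_submatrix X g)"
  have "dim (colR X ` range g) = CARD('d)"
    using mrk_range_eq_card_iff[of X g] assms(2) unfolding mrk_def by simp
  then have span: "span (colR X ` range g) = UNIV" using dim_eq_full[of "colR X ` range g"] by simp
  have of_int_vec_add: "of_int_vec (a + b) = of_int_vec a + of_int_vec b" for a b :: "int^'d"
    by (simp add: vec_eq_iff of_int_vec_def)
  have "(\<lambda>v. (+) v ` int_gen X (range g)) ` (span (colR X ` range g) \<inter> int_lattice)
      = image of_int_vec ` range (\<lambda>v. (+) v ` ?L)"
    unfolding span int_lattice_eq_range_of_int_vec int_gen_range[OF assms(1)]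
    by (simp add: image_image of_int_vec_add)
  moreover have inj: "inj of_int_vec" by (rule injI) (simp add: vec_eq_iff of_int_vec_def)
  have "inj_on (image of_int_vec) A" for A :: "(int^'d) set set"
    by (rule inj_onI) (simp add: inj_image_eq_iff[OF inj])
  ultimately have "mult X (range g) = lattice_index (column_submatrix X g)"
    unfolding mult_def lattice_index_def by (simp add: card_image)
  then show ?thesis using lattice_index_eq_abs_det[OF assms(2)] by simp
qed

lemma abs_det_column_submatrix_eq:
  fixes X Y :: "'d::finite \<Rightarrow> 'e \<Rightarrow> int"
  assumes "same_arith_matroid X Y" "inj g"
  shows "\<bar>det (column_submatrix X g)\<bar> = \<bar>det (column_submatrix Y g)\<bar>"
proof -
  have rk: "mrk X (range g) = mrk Y (range g)" and mu: "mult X (range g) = mult Y (range g)"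
    using assms(1) unfolding same_arith_matroid_def by auto
  show ?thesis
  proof (cases "det (column_submatrix X g) = 0")
    case True
    then have "det (column_submatrix Y g) = 0" using rk mrk_range_eq_card_iff by metis
    then show ?thesis using True by simp
  next
    case False
    then have "det (column_submatrix Y g) \<noteq> 0" using rk mrk_range_eq_card_iff by metis
    then show ?thesis using False mu mult_range_eq_abs_det[OF assms(2)] by metis
  qed
qed

section \<open>Minors of (B | A) for diagonal B\<close>

lemma det_eq_sum_over_permutations:
  fixes M :: "'a::comm_ring_1^'n^'n"
  assumes "S \<subseteq> {p. p permutes UNIV}" and "\<And>p. p permutes UNIV \<Longrightarrow> p \<notin> S \<Longrightarrow> (\<Prod>i\<in>UNIV. M $ i $ p i) = 0"
  shows "det M = (\<Sum>p\<in>S. of_int (sign p) * (\<Prod>i\<in>UNIV. M $ i $ p i))"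
  unfolding det_def by (rule sum.mono_neutral_right) (use assms in \<open>auto simp: finite_permutations\<close>)

lemma diagonal_entry_nonzero:
  fixes B :: "'d::finite \<Rightarrow> 'd \<Rightarrow> int"
  assumes diag: "\<forall>i k. i \<noteq> k \<longrightarrow> B i k = 0" and rank: "dim (span (range (colR B))) = CARD('d)"
  shows "B k k \<noteq> 0"
proof
  assume "B k k = 0"
  then have "B i k = 0" for i using diag by (cases "i = k") auto
  then have "colR B k = 0" by (simp add: colR_def vec_eq_iff)
  then have "range (colR B) = insert 0 (colR B ` (UNIV - {k}))"
    by (metis image_insert insert_UNIV insert_Diff_single)
  then have "dim (span (range (colR B))) = dim (colR B ` (UNIV - {k}))"
    by simp
  also have "\<dots> \<le> card (UNIV - {k})"
    using dim_le_card'[of "colR B ` (UNIV - {k})"] card_image_le[of "UNIV - {k}" "colR B"] by simp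
  also have "\<dots> < CARD('d)" by (simp add: card_Diff1_less)
  finally show False using rank by simp
qed

lemma column_submatrix_blockmat:
  "column_submatrix (blockmat B Z) g $ r $ l = (case g l of Inl k \<Rightarrow> B r k | Inr j \<Rightarrow> Z r j)"
  by (simp add: column_submatrix_def blockmat_def)

definition replace_column :: "'d \<Rightarrow> 'a \<Rightarrow> 'd \<Rightarrow> 'd + 'a" where
  "replace_column i j l = (if l = i then Inr j else Inl l)"

lemma det_replace_column:
  fixes B :: "'d::finite \<Rightarrow> 'd \<Rightarrow> int" and Z :: "'d \<Rightarrow> 'a \<Rightarrow> int"
  assumes diag: "\<forall>i k. i \<noteq> k \<longrightarrow> B i k = 0"
  shows "det (column_submatrix (blockmat B Z) (replace_column i j)) = Z i j * (\<Prod>r\<in>UNIV - {i}. B r r)"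
proof -
  let ?Y = "column_submatrix (blockmat B Z) (replace_column i j)"
  have Y: "?Y $ r $ l = (if l = i then Z r j else B r l)" for r l
    by (simp add: column_submatrix_blockmat replace_column_def)
  have "det ?Y = (\<Prod>r\<in>UNIV. ?Y $ r $ r)"
  proof -
    have "(\<Prod>r\<in>UNIV. ?Y $ r $ p r) = 0" if p: "p permutes UNIV" "p \<noteq> id" for p
    proof -
      obtain r where "p r \<noteq> r" using p(2) by (auto simp: fun_eq_iff)
      then obtain r' where "p r' \<noteq> r'" "p r' \<noteq> i"
        by (metis permutes_inj[OF p(1)] injD)
      then have "?Y $ r' $ p r' = 0" using diag by (simp add: Y)
      then show ?thesis by (intro prod_zero) auto
    qed
    then show ?thesis by (subst det_eq_sum_over_permutations[of "{id}"]) auto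
  qed
  also have "\<dots> = Z i j * (\<Prod>r\<in>UNIV - {i}. B r r)"
    by (simp add: prod.remove[of UNIV i] Y)
  finally show ?thesis .
qed

lemma abs_entry_eq_if_same_arith_matroid:
  fixes B :: "'d::finite \<Rightarrow> 'd \<Rightarrow> int" and Z1 Z2 :: "'d \<Rightarrow> 'a \<Rightarrow> int"
  assumes diag: "\<forall>i k. i \<noteq> k \<longrightarrow> B i k = 0" and nz: "\<And>k. B k k \<noteq> 0"
    and same: "same_arith_matroid (blockmat B Z1) (blockmat B Z2)"
  shows "\<bar>Z1 i j\<bar> = \<bar>Z2 i j\<bar>"
proof -
  have "inj (replace_column i j)" by (rule injI) (auto simp: replace_column_def split: if_splits)
  then have "\<bar>Z1 i j * (\<Prod>r\<in>UNIV - {i}. B r r)\<bar> = \<bar>Z2 i j * (\<Prod>r\<in>UNIV - {i}. B r r)\<bar>"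
    using abs_det_column_submatrix_eq[OF same, of "replace_column i j"] by (simp add: det_replace_column[OF diag])
  moreover have "(\<Prod>r\<in>UNIV - {i}. B r r) \<noteq> 0" using nz by simp
  ultimately show ?thesis by (simp add: abs_mult)
qed

section \<open>Minors along a cycle\<close>

definition cyc_pred :: "nat \<Rightarrow> nat \<Rightarrow> nat" where
  "cyc_pred k s = (if s = 0 then k - 1 else s - 1)"

lemma cyc_pred_less: "s < k \<Longrightarrow> cyc_pred k s < k"
  by (auto simp: cyc_pred_def)

lemma inj_on_cyc_pred: "inj_on (cyc_pred k) {..<k}"
  by (auto simp: inj_on_def cyc_pred_def split: if_splits)

lemma fixed_or_cyc_pred:
  assumes k: "2 \<le> k" and inj: "inj_on \<sigma> {..<k}"
    and \<sigma>: "\<And>s. s < k \<Longrightarrow> \<sigma> s = s \<or> \<sigma> s = cyc_pred k s"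
  shows "(\<forall>s<k. \<sigma> s = s) \<or> (\<forall>s<k. \<sigma> s = cyc_pred k s)"
proof (cases "\<exists>s<k. \<sigma> s = s")
  case True
  \<comment> \<open>A fixed point s forces \<sigma> (s + 1) = s + 1, as \<sigma> (s + 1) = s would contradict injectivity;
    going once around the cycle makes every point fixed.\<close>
  have step: "\<sigma> (Suc s) = Suc s" if "Suc s < k" "\<sigma> s = s" for s
  proof (rule ccontr)
    assume "\<sigma> (Suc s) \<noteq> Suc s"
    then have "\<sigma> (Suc s) = \<sigma> s" using \<sigma>[OF that(1)] that(2) by (simp add: cyc_pred_def)
    then show False using inj_onD[OF inj, of "Suc s" s] that(1) by simp
  qed
  have up: "\<sigma> t = t" if "\<sigma> s = s" "s \<le> t" "t < k" for s t
    using that by (induction t) (auto simp: le_Suc_eq intro: step)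
  obtain s where "s < k" "\<sigma> s = s" using True by blast
  then have "\<sigma> (k - 1) = k - 1" using up by simp
  then have "\<sigma> 0 = 0"
    using \<sigma>[of 0] inj_onD[OF inj, of 0 "k - 1"] k by (auto simp: cyc_pred_def)
  then show ?thesis using up by blast
qed (use \<sigma> in blast)

text \<open>The vertices r(\<rho> 0), c(\<gamma> 0), r(\<rho> 1), c(\<gamma> 1), ..., r(\<rho> (k - 1)), c(\<gamma> (k - 1)) form a chordless
  cycle of the bipartite graph with edge set E.\<close>

definition induced_cycle :: "('d \<times> 'a) set \<Rightarrow> nat \<Rightarrow> (nat \<Rightarrow> 'd) \<Rightarrow> (nat \<Rightarrow> 'a) \<Rightarrow> bool" where
  "induced_cycle E k \<rho> \<gamma> \<longleftrightarrow> 2 \<le> k \<and> inj_on \<rho> {..<k} \<and> inj_on \<gamma> {..<k} \<and>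
     (\<forall>s<k. \<forall>t<k. (\<rho> s, \<gamma> t) \<in> E \<longleftrightarrow> t = s \<or> t = cyc_pred k s)"

lemma induced_cycleI:
  assumes "2 \<le> k" "inj_on \<rho> {..<k}" "inj_on \<gamma> {..<k}"
    and "\<And>s. s < k \<Longrightarrow> (\<rho> s, \<gamma> s) \<in> E" and "\<And>s. s < k \<Longrightarrow> (\<rho> s, \<gamma> (cyc_pred k s)) \<in> E"
    and "\<And>s t. s < k \<Longrightarrow> t < k \<Longrightarrow> (\<rho> s, \<gamma> t) \<in> E \<Longrightarrow> t = s \<or> t = cyc_pred k s"
  shows "induced_cycle E k \<rho> \<gamma>"
  unfolding induced_cycle_def using assms by blast

definition cycle_columns :: "(nat \<Rightarrow> 'd) \<Rightarrow> (nat \<Rightarrow> 'a) \<Rightarrow> nat \<Rightarrow> 'd \<Rightarrow> 'd + 'a" where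
  "cycle_columns \<rho> \<gamma> k l = (if l \<in> \<rho> ` {..<k} then Inr (\<gamma> (the_inv_into {..<k} \<rho> l)) else Inl l)"

definition cycle_rotation :: "(nat \<Rightarrow> 'd) \<Rightarrow> nat \<Rightarrow> 'd \<Rightarrow> 'd" where
  "cycle_rotation \<rho> k l = (if l \<in> \<rho> ` {..<k} then \<rho> (cyc_pred k (the_inv_into {..<k} \<rho> l)) else l)"

lemma inj_cycle_columns:
  assumes "inj_on \<rho> {..<k}" "inj_on \<gamma> {..<k}"
  shows "inj (cycle_columns \<rho> \<gamma> k)"
proof (rule injI)
  fix a b assume ab: "cycle_columns \<rho> \<gamma> k a = cycle_columns \<rho> \<gamma> k b"
  let ?\<iota> = "the_inv_into {..<k} \<rho>"
  show "a = b"
  proof (cases "a \<in> \<rho> ` {..<k}")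
    case True
    moreover have b: "b \<in> \<rho> ` {..<k}" using True ab by (auto simp: cycle_columns_def split: if_splits)
    moreover have "\<gamma> (?\<iota> a) = \<gamma> (?\<iota> b)" using True b ab by (simp add: cycle_columns_def)
    then have "?\<iota> a = ?\<iota> b"
      using inj_onD[OF assms(2)] the_inv_into_into[OF assms(1), of _ "{..<k}"] True b by blast
    ultimately show ?thesis using f_the_inv_into_f[OF assms(1)] by metis
  qed (use ab in \<open>auto simp: cycle_columns_def split: if_splits\<close>)
qed

lemma cycle_rotation_permutes:
  assumes \<rho>: "inj_on \<rho> {..<k}" shows "cycle_rotation \<rho> k permutes UNIV"
proof -
  let ?R = "\<rho> ` {..<k}"
  have "bij_betw (\<rho> \<circ> cyc_pred k \<circ> the_inv_into {..<k} \<rho>) ?R ?R"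
  proof (intro bij_betw_trans)
    show "bij_betw (the_inv_into {..<k} \<rho>) ?R {..<k}" using \<rho> by (simp add: bij_betw_the_inv_into inj_on_imp_bij_betw)
    have "cyc_pred k ` {..<k} = {..<k}"
      by (rule endo_inj_surj) (auto simp: cyc_pred_less inj_on_cyc_pred)
    then show "bij_betw (cyc_pred k) {..<k} {..<k}" by (simp add: bij_betw_def inj_on_cyc_pred)
    show "bij_betw \<rho> {..<k} ?R" using \<rho> by (simp add: inj_on_imp_bij_betw)
  qed
  then have "bij_betw (cycle_rotation \<rho> k) ?R ?R"
    by (rule bij_betw_cong[THEN iffD1, rotated]) (simp add: cycle_rotation_def)
  then have "cycle_rotation \<rho> k permutes ?R"
    by (rule bij_imp_permutes) (simp add: cycle_rotation_def)
  then show ?thesis using permutes_subset by blast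
qed

lemma cycle_minor_entry:
  shows "column_submatrix (blockmat B Z) (cycle_columns \<rho> \<gamma> k) $ r $ l
    = (if l \<in> \<rho> ` {..<k} then Z r (\<gamma> (the_inv_into {..<k} \<rho> l)) else B r l)"
  by (simp add: column_submatrix_blockmat cycle_columns_def)

lemma id_or_cycle_rotation:
  assumes k: "2 \<le> k" and \<rho>: "inj_on \<rho> {..<k}" and p: "p permutes UNIV"
    and outside: "\<And>l. l \<notin> \<rho> ` {..<k} \<Longrightarrow> p l = l"
    and inside: "\<And>s. s < k \<Longrightarrow> p (\<rho> s) = \<rho> s \<or> p (\<rho> s) = \<rho> (cyc_pred k s)"
  shows "p = id \<or> p = cycle_rotation \<rho> k"
proof -
  define \<sigma> where "\<sigma> s = (if p (\<rho> s) = \<rho> s then s else cyc_pred k s)" for s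
  have p_\<sigma>: "p (\<rho> s) = \<rho> (\<sigma> s)" if "s < k" for s using inside[OF that] by (auto simp: \<sigma>_def)
  have "(\<forall>s<k. \<sigma> s = s) \<or> (\<forall>s<k. \<sigma> s = cyc_pred k s)"
  proof (rule fixed_or_cyc_pred[OF k])
    show "inj_on \<sigma> {..<k}"
    proof (rule inj_onI)
      fix s t assume st: "s \<in> {..<k}" "t \<in> {..<k}" and "\<sigma> s = \<sigma> t"
      then have "p (\<rho> s) = p (\<rho> t)" using p_\<sigma> by simp
      then have "\<rho> s = \<rho> t" using permutes_inj[OF p] by (metis injD)
      then show "s = t" using inj_onD[OF \<rho>] st by blast
    qed
  qed (simp add: \<sigma>_def)
  then show ?thesis
  proof
    assume "\<forall>s<k. \<sigma> s = s"
    then have "p l = l" for l using outside p_\<sigma> by (cases "l \<in> \<rho> ` {..<k}") auto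
    then show ?thesis by auto
  next
    assume "\<forall>s<k. \<sigma> s = cyc_pred k s"
    then have "p l = cycle_rotation \<rho> k l" for l
      using outside p_\<sigma> the_inv_into_f_f[OF \<rho>] by (cases "l \<in> \<rho> ` {..<k}") (auto simp: cycle_rotation_def)
    then show ?thesis by auto
  qed
qed

lemma nonzero_cycle_minor_term:
  fixes B :: "'d::finite \<Rightarrow> 'd \<Rightarrow> int" and Z :: "'d \<Rightarrow> 'a \<Rightarrow> int"
  assumes diag: "\<forall>i k. i \<noteq> k \<longrightarrow> B i k = 0" and cyc: "induced_cycle (graph_edges Z) k \<rho> \<gamma>"
    and p: "p permutes UNIV"
    and nz: "(\<Prod>r\<in>UNIV. column_submatrix (blockmat B Z) (cycle_columns \<rho> \<gamma> k) $ r $ p r) \<noteq> 0"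
  shows "p = id \<or> p = cycle_rotation \<rho> k"
proof -
  let ?R = "\<rho> ` {..<k}"
  have k: "2 \<le> k" and \<rho>: "inj_on \<rho> {..<k}"
    and Z: "\<And>s t. s < k \<Longrightarrow> t < k \<Longrightarrow> Z (\<rho> s) (\<gamma> t) \<noteq> 0 \<longleftrightarrow> t = s \<or> t = cyc_pred k s"
    using cyc unfolding induced_cycle_def graph_edges_def by auto
  have nz_entry: "(if p r \<in> ?R then Z r (\<gamma> (the_inv_into {..<k} \<rho> (p r))) else B r (p r)) \<noteq> 0" for r
    using nz by (simp add: cycle_minor_entry)
  \<comment> \<open>B is diagonal, so p fixes the columns of B and hence maps the cycle columns among themselves.\<close>
  have outside: "p l = l" if "l \<notin> ?R" for l
    using nz_entry[of "inv p l"] that diag by (metis permutes_inverses(1)[OF p])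
  have "p (\<rho> s) = \<rho> s \<or> p (\<rho> s) = \<rho> (cyc_pred k s)" if "s < k" for s
  proof -
    have "p (\<rho> s) \<in> ?R"
      using outside[of "p (\<rho> s)"] outside[of "\<rho> s"] that permutes_inj[OF p] by (metis imageI injD lessThan_iff)
    then obtain t where t: "t < k" "p (\<rho> s) = \<rho> t" by auto
    then have "Z (\<rho> s) (\<gamma> t) \<noteq> 0" using nz_entry[of "\<rho> s"] the_inv_into_f_f[OF \<rho>] by auto
    then show ?thesis using Z[OF that t(1)] t(2) by auto
  qed
  then show ?thesis using id_or_cycle_rotation[OF k \<rho> p outside] by blast
qed

lemma prod_split_cycle:
  fixes f :: "'d::finite \<Rightarrow> 'b::comm_monoid_mult"
  assumes "inj_on \<rho> {..<k}"
  shows "(\<Prod>r\<in>UNIV. f r) = (\<Prod>r\<in>UNIV - \<rho> ` {..<k}. f r) * (\<Prod>s<k. f (\<rho> s))"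
  using prod.subset_diff[of "\<rho> ` {..<k}" UNIV f] prod.reindex[OF assms, of f] by (simp add: mult.commute)

lemma det_cycle_minor:
  fixes B :: "'d::finite \<Rightarrow> 'd \<Rightarrow> int" and Z :: "'d \<Rightarrow> 'a \<Rightarrow> int"
  assumes diag: "\<forall>i k. i \<noteq> k \<longrightarrow> B i k = 0" and cyc: "induced_cycle (graph_edges Z) k \<rho> \<gamma>"
  shows "det (column_submatrix (blockmat B Z) (cycle_columns \<rho> \<gamma> k)) = (\<Prod>r\<in>UNIV - \<rho> ` {..<k}. B r r) *
    ((\<Prod>s<k. Z (\<rho> s) (\<gamma> s)) + of_int (sign (cycle_rotation \<rho> k)) * (\<Prod>s<k. Z (\<rho> s) (\<gamma> (cyc_pred k s))))"
proof -
  let ?Y = "column_submatrix (blockmat B Z) (cycle_columns \<rho> \<gamma> k)" and ?\<pi> = "cycle_rotation \<rho> k"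
  have k: "2 \<le> k" and \<rho>: "inj_on \<rho> {..<k}" using cyc unfolding induced_cycle_def by auto
  have \<iota>: "the_inv_into {..<k} \<rho> (\<rho> s) = s" if "s < k" for s using the_inv_into_f_f[OF \<rho>] that by simp
  have Y_cycle: "?Y $ r $ \<rho> s = Z r (\<gamma> s)" if "s < k" for r s
    using that by (simp add: cycle_minor_entry \<iota>)
  have Y_outside: "?Y $ r $ l = B r l" if "l \<notin> \<rho> ` {..<k}" for r l
    using that by (simp add: cycle_minor_entry)
  have \<pi>_cycle: "?\<pi> (\<rho> s) = \<rho> (cyc_pred k s)" if "s < k" for s
    using that by (simp add: cycle_rotation_def \<iota>)
  have \<pi>_outside: "?\<pi> l = l" if "l \<notin> \<rho> ` {..<k}" for l
    using that by (simp add: cycle_rotation_def)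
  have "?\<pi> \<noteq> id"
  proof
    assume "?\<pi> = id"
    then have "\<rho> (k - 1) = \<rho> 0" using \<pi>_cycle[of 0] k by (simp add: cyc_pred_def)
    then show False using inj_onD[OF \<rho>, of "k - 1" 0] k by simp
  qed
  then have "det ?Y = (\<Prod>r\<in>UNIV. ?Y $ r $ r) + of_int (sign ?\<pi>) * (\<Prod>r\<in>UNIV. ?Y $ r $ ?\<pi> r)"
    using det_eq_sum_over_permutations[of "{id, ?\<pi>}" ?Y] nonzero_cycle_minor_term[OF diag cyc]
      cycle_rotation_permutes[OF \<rho>] by auto
  also have "(\<Prod>r\<in>UNIV. ?Y $ r $ r) = (\<Prod>r\<in>UNIV - \<rho> ` {..<k}. B r r) * (\<Prod>s<k. Z (\<rho> s) (\<gamma> s))"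
    by (simp add: prod_split_cycle[OF \<rho>] Y_cycle Y_outside)
  also have "(\<Prod>r\<in>UNIV. ?Y $ r $ ?\<pi> r)
      = (\<Prod>r\<in>UNIV - \<rho> ` {..<k}. B r r) * (\<Prod>s<k. Z (\<rho> s) (\<gamma> (cyc_pred k s)))"
    by (simp add: prod_split_cycle[OF \<rho>] Y_cycle Y_outside \<pi>_cycle \<pi>_outside cyc_pred_less)
  finally show ?thesis by (simp add: algebra_simps)
qed

lemma abs_det_cycle_minor_sign_flip:
  fixes B :: "'d::finite \<Rightarrow> 'd \<Rightarrow> int" and Z1 Z2 :: "'d \<Rightarrow> 'a \<Rightarrow> int"
  assumes diag: "\<forall>i k. i \<noteq> k \<longrightarrow> B i k = 0" and nz: "\<And>k. B k k \<noteq> 0"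
    and cyc1: "induced_cycle (graph_edges Z1) k \<rho> \<gamma>" and cyc2: "induced_cycle (graph_edges Z2) k \<rho> \<gamma>"
    and agree: "\<forall>s<k. Z2 (\<rho> s) (\<gamma> s) = Z1 (\<rho> s) (\<gamma> s)"
    and agree_pred: "\<forall>s. 0 < s \<and> s < k \<longrightarrow> Z2 (\<rho> s) (\<gamma> (cyc_pred k s)) = Z1 (\<rho> s) (\<gamma> (cyc_pred k s))"
    and flip: "Z2 (\<rho> 0) (\<gamma> (cyc_pred k 0)) = - Z1 (\<rho> 0) (\<gamma> (cyc_pred k 0))"
  shows "\<bar>det (column_submatrix (blockmat B Z1) (cycle_columns \<rho> \<gamma> k))\<bar>
    \<noteq> \<bar>det (column_submatrix (blockmat B Z2) (cycle_columns \<rho> \<gamma> k))\<bar>"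
proof -
  let ?B = "\<Prod>r\<in>UNIV - \<rho> ` {..<k}. B r r" and ?sg = "of_int (sign (cycle_rotation \<rho> k)) :: int"
  let ?P1 = "\<Prod>s<k. Z1 (\<rho> s) (\<gamma> s)" and ?P2 = "\<Prod>s<k. Z1 (\<rho> s) (\<gamma> (cyc_pred k s))"
  have k: "0 < k" and Z1: "\<And>s t. s < k \<Longrightarrow> t < k \<Longrightarrow> Z1 (\<rho> s) (\<gamma> t) \<noteq> 0 \<longleftrightarrow> t = s \<or> t = cyc_pred k s"
    using cyc1 unfolding induced_cycle_def graph_edges_def by auto
  have "(\<Prod>s<k. Z2 (\<rho> s) (\<gamma> (cyc_pred k s))) = - ?P2"
  proof -
    have "(\<Prod>s\<in>{..<k} - {0}. Z2 (\<rho> s) (\<gamma> (cyc_pred k s))) = (\<Prod>s\<in>{..<k} - {0}. Z1 (\<rho> s) (\<gamma> (cyc_pred k s)))"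
      using agree_pred by (intro prod.cong) auto
    then show ?thesis using k flip by (simp add: prod.remove[of "{..<k}" 0])
  qed
  then have det2: "det (column_submatrix (blockmat B Z2) (cycle_columns \<rho> \<gamma> k)) = ?B * (?P1 - ?sg * ?P2)"
    using agree by (simp add: det_cycle_minor[OF diag cyc2])
  have "?P1 \<noteq> 0" "?sg * ?P2 \<noteq> 0" using Z1 cyc_pred_less by (auto simp: sign_def)
  then have "\<bar>?P1 + ?sg * ?P2\<bar> \<noteq> \<bar>?P1 - ?sg * ?P2\<bar>" by arith
  moreover have "?B \<noteq> 0" using nz by simp
  ultimately show ?thesis by (simp add: det_cycle_minor[OF diag cyc1] det2 abs_mult)
qed

section \<open>Shortest closing walks\<close>

lemma sym_relpow:
  assumes "sym R" "(a, b) \<in> R ^^ n" shows "(b, a) \<in> R ^^ n"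
  using assms(2)
proof (induction n arbitrary: a)
  case (Suc n)
  then obtain c where "(a, c) \<in> R" "(c, b) \<in> R ^^ n" using relpow_Suc_D2[of a b n R] by blast
  then show ?case using Suc.IH[of c] symD[OF assms(1)] by (blast intro: relpow_Suc_I)
qed simp

lemma walk_segment_relpow:
  assumes "\<forall>t<m. (w t, w (Suc t)) \<in> R" "a \<le> b" "b \<le> m"
  shows "(w a, w b) \<in> R ^^ (b - a)"
  unfolding relpow_fun_conv using assms by (intro exI[of _ "\<lambda>t. w (a + t)"]) auto

lemma adj_sym: "adj F u v \<Longrightarrow> adj F v u"
  by (auto simp: adj_def)

lemma adj_Inl_Inr [simp]: "adj F (Inl i) (Inr j) \<longleftrightarrow> (i, j) \<in> F"
  and adj_Inr_Inl [simp]: "adj F (Inr j) (Inl i) \<longleftrightarrow> (i, j) \<in> F"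
  by (auto simp: adj_def)

lemma adj_Un: "adj (F \<union> H) u v \<longleftrightarrow> adj F u v \<or> adj H u v"
  by (auto simp: adj_def)

lemma shortest_closing_walk:
  fixes F H :: "('d \<times> 'a) set"
  assumes "(i0, j0) \<in> H" and conn: "\<forall>(i, j)\<in>H. connected_in F (Inl i) (Inr j)"
  obtains m w i j where "(i, j) \<in> H" "w 0 = Inl i" "w m = Inr j" "\<forall>t<m. adj F (w t) (w (Suc t))"
    "\<forall>i' j' n. (i', j') \<in> H \<longrightarrow> (Inl i', Inr j') \<in> {(u, v). adj F u v} ^^ n \<longrightarrow> m \<le> n"
proof -
  define Q where "Q n \<longleftrightarrow> (\<exists>(i, j)\<in>H. (Inl i, Inr j) \<in> {(u, v). adj F u v} ^^ n)" for n
  have "\<exists>n. Q n" using assms unfolding Q_def connected_in_def rtrancl_power by blast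
  then have "Q (LEAST n. Q n)" and "\<And>n. Q n \<Longrightarrow> (LEAST n. Q n) \<le> n"
    by (auto intro: LeastI_ex Least_le)
  then show ?thesis using that unfolding Q_def relpow_fun_conv by blast
qed

lemma shortest_closing_walk_chordless:
  fixes F H :: "('d \<times> 'a) set"
  defines "R \<equiv> {(u, v). adj F u v}"
  assumes ends: "(i, j) \<in> H" "w 0 = Inl i" "w m = Inr j" and walk: "\<forall>t<m. (w t, w (Suc t)) \<in> R"
    and shortest: "\<forall>i' j' n. (i', j') \<in> H \<longrightarrow> (Inl i', Inr j') \<in> R ^^ n \<longrightarrow> m \<le> n"
    and ab: "a < b" "b \<le> m"
  shows "w a \<noteq> w b" and "adj (F \<union> H) (w a) (w b) \<Longrightarrow> b = Suc a \<or> (a = 0 \<and> b = m)"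
proof -
  \<comment> \<open>A shortcut between w a and w b would give a shorter closing walk.\<close>
  have geodesic: "b - a \<le> c" if "(w a, w b) \<in> R ^^ c" for c
  proof -
    have "(w 0, w m) \<in> (R ^^ a O R ^^ c) O R ^^ (m - b)"
      using walk_segment_relpow[OF walk, of 0 a] walk_segment_relpow[OF walk, of b m] that ab by auto
    then have "(Inl i, Inr j) \<in> R ^^ (a + c + (m - b))" using ends(2,3) by (simp only: relpow_add)
    then have "m \<le> a + c + (m - b)" using shortest ends(1) by blast
    then show ?thesis using ab by simp
  qed
  show "w a \<noteq> w b" using geodesic[of 0] ab by auto
  assume "adj (F \<union> H) (w a) (w b)"
  then consider "adj F (w a) (w b)" | "adj H (w a) (w b)" by (auto simp: adj_Un)
  then show "b = Suc a \<or> (a = 0 \<and> b = m)"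
  proof cases
    case 1
    then have "b - a \<le> 1" using geodesic[of 1] by (simp add: R_def)
    then show ?thesis using ab by linarith
  next
    case 2
    have sym: "sym R" unfolding R_def by (auto intro: symI adj_sym)
    have seg: "(w a, w b) \<in> R ^^ (b - a)" using walk_segment_relpow[OF walk] ab by simp
    obtain i' j' where H': "(i', j') \<in> H"
      and "w a = Inl i' \<and> w b = Inr j' \<or> w a = Inr j' \<and> w b = Inl i'"
      using 2 unfolding adj_def by blast
    then have "(Inl i', Inr j') \<in> R ^^ (b - a)" using seg sym_relpow[OF sym seg] by auto
    then have "m \<le> b - a" using shortest H' by blast
    then show ?thesis using ab by linarith
  qed
qed

lemma walk_alternates:
  assumes walk: "\<forall>t<m. adj F (w t) (w (Suc t))" and "isl (w 0)" and "t \<le> m"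
  shows "isl (w t) \<longleftrightarrow> even t"
  using assms(3)
proof (induction t)
  case (Suc t)
  then have "adj F (w t) (w (Suc t))" using walk by simp
  then have "isl (w t) \<longleftrightarrow> \<not> isl (w (Suc t))" by (auto simp: adj_def)
  then show ?case using Suc by simp
qed (simp add: assms(2))

lemma walk_rows_columns:
  assumes walk: "\<forall>t<m. adj F (w t) (w (Suc t))" and ends: "w 0 = Inl i" "w m = Inr j"
    and distinct: "\<And>a b. a < b \<Longrightarrow> b \<le> m \<Longrightarrow> w a \<noteq> w b"
  shows "\<exists>k \<rho> \<gamma>. 0 < k \<and> m = 2 * k - 1 \<and> inj_on \<rho> {..<k} \<and> inj_on \<gamma> {..<k} \<and>
    (\<forall>s<k. w (2 * s) = Inl (\<rho> s) \<and> w (2 * s + 1) = Inr (\<gamma> s))"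
proof -
  have side: "isl (w t) \<longleftrightarrow> even t" if "t \<le> m" for t
    using walk_alternates[OF walk _ that] ends(1) by simp
  have "odd m" using side[of m] ends(2) by simp
  then obtain k where k: "0 < k" "m = 2 * k - 1" by (auto elim!: oddE intro: that[of "_ + 1"])
  define \<rho> where "\<rho> s = projl (w (2 * s))" for s
  define \<gamma> where "\<gamma> s = projr (w (2 * s + 1))" for s
  have w: "w (2 * s) = Inl (\<rho> s) \<and> w (2 * s + 1) = Inr (\<gamma> s)" if "s < k" for s
    using side[of "2 * s"] side[of "2 * s + 1"] that k unfolding \<rho>_def \<gamma>_def by simp
  have w_inj: "a = b" if "w a = w b" "a \<le> m" "b \<le> m" for a b
    using distinct that by (metis linorder_neqE_nat)
  have "inj_on \<rho> {..<k}"
  proof (rule inj_onI)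
    fix s s' assume "s \<in> {..<k}" "s' \<in> {..<k}" "\<rho> s = \<rho> s'"
    then show "s = s'" using w_inj[of "2 * s" "2 * s'"] w k by simp
  qed
  moreover have "inj_on \<gamma> {..<k}"
  proof (rule inj_onI)
    fix s s' assume "s \<in> {..<k}" "s' \<in> {..<k}" "\<gamma> s = \<gamma> s'"
    then show "s = s'" using w_inj[of "2 * s + 1" "2 * s' + 1"] w k by simp
  qed
  ultimately show ?thesis using k w by blast
qed

lemma cycle_edges_of_walk:
  assumes walk: "\<forall>t<m. adj F (w t) (w (Suc t))" and m: "m = 2 * k - 1"
    and even: "\<And>s. s < k \<Longrightarrow> w (2 * s) = Inl (\<rho> s)" and odd: "\<And>s. s < k \<Longrightarrow> w (2 * s + 1) = Inr (\<gamma> s)"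
  shows "s < k \<Longrightarrow> (\<rho> s, \<gamma> s) \<in> F" and "0 < s \<Longrightarrow> s < k \<Longrightarrow> (\<rho> s, \<gamma> (cyc_pred k s)) \<in> F"
proof -
  show "(\<rho> s, \<gamma> s) \<in> F" if s: "s < k"
  proof -
    have "2 * s < m" using s m by simp
    then have "adj F (w (2 * s)) (w (2 * s + 1))" using walk by simp
    then show ?thesis using even[OF s] odd[OF s] by (metis adj_Inl_Inr)
  qed
  show "(\<rho> s, \<gamma> (cyc_pred k s)) \<in> F" if "0 < s" "s < k"
  proof -
    obtain s' where s: "s = Suc s'" using \<open>0 < s\<close> gr0_implies_Suc by blast
    have lt: "2 * s' + 1 < m" and s'k: "s' < k" and eq: "Suc (2 * s' + 1) = 2 * s"
      using s that m by simp_all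
    have "adj F (Inr (\<gamma> s')) (Inl (\<rho> s))"
      using walk[rule_format, OF lt] unfolding eq even[OF that(2)] odd[OF s'k] .
    then show ?thesis by (simp only: adj_Inr_Inl s cyc_pred_def) simp
  qed
qed

lemma chords_of_chordless_walk:
  assumes m: "m = 2 * k - 1"
    and even: "\<And>s. s < k \<Longrightarrow> w (2 * s) = Inl (\<rho> s)" and odd: "\<And>s. s < k \<Longrightarrow> w (2 * s + 1) = Inr (\<gamma> s)"
    and chordless: "\<And>a b. a < b \<Longrightarrow> b \<le> m \<Longrightarrow> adj E (w a) (w b) \<Longrightarrow> b = Suc a \<or> (a = 0 \<and> b = m)"
    and st: "s < k" "t < k" and e: "(\<rho> s, \<gamma> t) \<in> E"
  shows "t = s \<or> t = cyc_pred k s"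
proof (cases "s \<le> t")
  case True
  have "adj E (w (2 * s)) (w (2 * t + 1))" using e even odd st by simp
  then have "2 * t + 1 = Suc (2 * s) \<or> (2 * s = 0 \<and> 2 * t + 1 = m)"
    using chordless[of "2 * s" "2 * t + 1"] True st m by simp
  then show ?thesis using m by (auto simp: cyc_pred_def)
next
  case False
  have "adj E (w (2 * t + 1)) (w (2 * s))" using e even odd st by simp
  then have "2 * s = Suc (2 * t + 1)"
    using chordless[of "2 * t + 1" "2 * s"] False st m by simp
  then show ?thesis by (simp add: cyc_pred_def)
qed

lemma chordless_cycle_exists:
  fixes F H :: "('d \<times> 'a) set"
  assumes H: "(i0, j0) \<in> H" and disj: "F \<inter> H = {}"
    and conn: "\<forall>(i, j)\<in>H. connected_in F (Inl i) (Inr j)"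
  shows "\<exists>k \<rho> \<gamma>. induced_cycle (F \<union> H) k \<rho> \<gamma> \<and> (\<forall>s<k. (\<rho> s, \<gamma> s) \<in> F) \<and>
    (\<forall>s. 0 < s \<and> s < k \<longrightarrow> (\<rho> s, \<gamma> (cyc_pred k s)) \<in> F) \<and> (\<rho> 0, \<gamma> (cyc_pred k 0)) \<in> H"
proof -
  obtain m w i j where ends: "(i, j) \<in> H" "w 0 = Inl i" "w m = Inr j"
    and walk: "\<forall>t<m. adj F (w t) (w (Suc t))"
    and shortest: "\<forall>i' j' n. (i', j') \<in> H \<longrightarrow> (Inl i', Inr j') \<in> {(u, v). adj F u v} ^^ n \<longrightarrow> m \<le> n"
    by (rule shortest_closing_walk[OF H conn])
  have "\<forall>t<m. (w t, w (Suc t)) \<in> {(u, v). adj F u v}" using walk by simp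
  note chordless = shortest_closing_walk_chordless[OF ends this shortest]
  obtain k \<rho> \<gamma> where k: "0 < k" "m = 2 * k - 1" and inj: "inj_on \<rho> {..<k}" "inj_on \<gamma> {..<k}"
    and rows_cols: "\<forall>s<k. w (2 * s) = Inl (\<rho> s) \<and> w (2 * s + 1) = Inr (\<gamma> s)"
    using walk_rows_columns[OF walk ends(2,3) chordless(1)] by blast
  have w_even: "w (2 * s) = Inl (\<rho> s)" and w_odd: "w (2 * s + 1) = Inr (\<gamma> s)" if "s < k" for s
    using rows_cols that by simp_all
  have "m \<noteq> 1"
  proof
    assume "m = 1"
    then have "(i, j) \<in> F" using walk ends by force
    then show False using ends(1) disj by blast
  qed
  then have "2 \<le> k" using k by simp
  have edge: "(\<rho> s, \<gamma> s) \<in> F" if "s < k" for s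
    by (rule cycle_edges_of_walk(1)[OF walk k(2) _ _ that]) (fact w_even w_odd)+
  have edge_pred: "(\<rho> s, \<gamma> (cyc_pred k s)) \<in> F" if "0 < s" "s < k" for s
    by (rule cycle_edges_of_walk(2)[OF walk k(2) _ _ that]) (fact w_even w_odd)+
  have chord: "t = s \<or> t = cyc_pred k s" if "s < k" "t < k" "(\<rho> s, \<gamma> t) \<in> F \<union> H" for s t
    by (rule chords_of_chordless_walk[OF k(2) _ _ _ that(1,2)]) (fact w_even w_odd chordless(2) that(3))+
  have closing: "(\<rho> 0, \<gamma> (cyc_pred k 0)) \<in> H"
  proof -
    have "w (2 * (k - 1) + 1) = Inr (\<gamma> (k - 1))" by (rule w_odd) (use k in simp)
    moreover have "2 * (k - 1) + 1 = m" using k by simp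
    ultimately have "\<gamma> (k - 1) = j" using ends(3) by simp
    moreover have "w (2 * 0) = Inl (\<rho> 0)" by (rule w_even) (use k in simp)
    then have "\<rho> 0 = i" using ends(2) by simp
    ultimately show ?thesis using ends(1) by (simp add: cyc_pred_def)
  qed
  have "(\<rho> s, \<gamma> (cyc_pred k s)) \<in> F \<union> H" if "s < k" for s
  proof (cases "s = 0")
    case False
    then show ?thesis using edge_pred that by blast
  qed (use closing in simp)
  then have "induced_cycle (F \<union> H) k \<rho> \<gamma>"
    using edge chord by (intro induced_cycleI[OF \<open>2 \<le> k\<close> inj]) auto
  then show ?thesis using edge edge_pred closing by blast
qed

section \<open>Uniqueness of the sign pattern\<close>

lemma connected_in_mono: "F \<subseteq> G \<Longrightarrow> connected_in F u v \<Longrightarrow> connected_in G u v"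
  unfolding connected_in_def adj_def by (erule rtrancl_mono[THEN subsetD, rotated]) blast

lemma coordinatizing_path_connects:
  assumes "coordinatizing_path A P" "A i j \<noteq> 0"
  shows "connected_in P (Inl i) (Inr j)"
proof -
  have "adj (graph_edges A) (Inl i) (Inr j)" using assms(2) by (simp add: graph_edges_def)
  then have "connected_in (graph_edges A) (Inl i) (Inr j)" unfolding connected_in_def by blast
  then show ?thesis using assms(1) unfolding coordinatizing_path_def by blast
qed

lemma agree_on_connecting_set_imp_eq:
  fixes B :: "'d::finite \<Rightarrow> 'd \<Rightarrow> int" and Z Z1 Z2 :: "'d \<Rightarrow> 'a \<Rightarrow> int"
  assumes diag: "\<forall>i k. i \<noteq> k \<longrightarrow> B i k = 0" and nz: "\<And>k. B k k \<noteq> 0"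
    and same1: "same_arith_matroid (blockmat B Z1) (blockmat B Z)"
    and same2: "same_arith_matroid (blockmat B Z2) (blockmat B Z)"
    and conn: "\<And>i j. Z i j \<noteq> 0 \<Longrightarrow> connected_in {(i, j). Z i j \<noteq> 0 \<and> Z1 i j = Z2 i j} (Inl i) (Inr j)"
  shows "Z1 = Z2"
proof (rule ccontr)
  assume "Z1 \<noteq> Z2"
  then obtain i0 j0 where ne: "Z1 i0 j0 \<noteq> Z2 i0 j0" by (auto simp: fun_eq_iff)
  have abs1: "\<bar>Z1 i j\<bar> = \<bar>Z i j\<bar>" and abs2: "\<bar>Z2 i j\<bar> = \<bar>Z i j\<bar>" for i j
    by (rule abs_entry_eq_if_same_arith_matroid[OF diag nz same1],
        rule abs_entry_eq_if_same_arith_matroid[OF diag nz same2])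
  define F where "F = {(i, j). Z i j \<noteq> 0 \<and> Z1 i j = Z2 i j}"
  define H where "H = {(i, j). Z i j \<noteq> 0 \<and> Z1 i j \<noteq> Z2 i j}"
  have H0: "(i0, j0) \<in> H" using ne abs1[of i0 j0] abs2[of i0 j0] by (auto simp: H_def)
  have disj: "F \<inter> H = {}" by (auto simp: F_def H_def)
  have conn_H: "\<forall>(i, j)\<in>H. connected_in F (Inl i) (Inr j)" using conn by (auto simp: F_def H_def)
  obtain k \<rho> \<gamma> where cyc: "induced_cycle (F \<union> H) k \<rho> \<gamma>"
    and agree: "\<forall>s<k. (\<rho> s, \<gamma> s) \<in> F" and agree_pred: "\<forall>s. 0 < s \<and> s < k \<longrightarrow> (\<rho> s, \<gamma> (cyc_pred k s)) \<in> F"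
    and flip: "(\<rho> 0, \<gamma> (cyc_pred k 0)) \<in> H"
    using chordless_cycle_exists[OF H0 disj conn_H] by blast
  have "graph_edges Z' = F \<union> H" if abs: "\<And>a b. \<bar>Z' a b\<bar> = \<bar>Z a b\<bar>" for Z'
  proof -
    have "Z' a b \<noteq> 0 \<longleftrightarrow> Z a b \<noteq> 0" for a b using abs[of a b] by auto
    then show ?thesis by (auto simp: graph_edges_def F_def H_def)
  qed
  then have cyc1: "induced_cycle (graph_edges Z1) k \<rho> \<gamma>" and cyc2: "induced_cycle (graph_edges Z2) k \<rho> \<gamma>"
    using cyc abs1 abs2 by simp_all
  have "Z2 (\<rho> 0) (\<gamma> (cyc_pred k 0)) = - Z1 (\<rho> 0) (\<gamma> (cyc_pred k 0))"
    using flip abs1[of "\<rho> 0" "\<gamma> (cyc_pred k 0)"] abs2[of "\<rho> 0" "\<gamma> (cyc_pred k 0)"]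
    unfolding H_def by auto
  moreover note agree agree_pred
  ultimately have "\<bar>det (column_submatrix (blockmat B Z1) (cycle_columns \<rho> \<gamma> k))\<bar>
      \<noteq> \<bar>det (column_submatrix (blockmat B Z2) (cycle_columns \<rho> \<gamma> k))\<bar>"
    using abs_det_cycle_minor_sign_flip[OF diag nz cyc1 cyc2] unfolding F_def by simp
  moreover have "inj (cycle_columns \<rho> \<gamma> k)"
    using cyc unfolding induced_cycle_def by (blast intro: inj_cycle_columns)
  ultimately show False
    using abs_det_column_submatrix_eq[OF same1] abs_det_column_submatrix_eq[OF same2] by simp
qed

theorem lemma3p5:
  fixes B :: "'d::finite \<Rightarrow> 'd \<Rightarrow> int"
    and A A' A'' :: "'d \<Rightarrow> 'a::finite \<Rightarrow> int"
    and P :: "('d \<times> 'a) set"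
    and \<sigma> :: "'d \<times> 'a \<Rightarrow> int"
  assumes X_rank: "mrk (blockmat B A) UNIV = CARD('d)"
    and B_diag: "\<forall>i k. i \<noteq> k \<longrightarrow> B i k = 0"
    and B_nonneg: "\<forall>i k. B i k \<ge> 0"
    and B_rank: "dim (span (range (colR B))) = CARD('d)"
    and P_path: "coordinatizing_path A P"
    and sigma: "\<forall>p\<in>P. \<sigma> p \<in> {-1, 1}"
    and same': "same_arith_matroid (blockmat B A') (blockmat B A)"
    and same'': "same_arith_matroid (blockmat B A'') (blockmat B A)"
    and sign': "\<forall>(i, j)\<in>P. A' i j = \<sigma> (i, j) * A i j"
    and sign'': "\<forall>(i, j)\<in>P. A'' i j = \<sigma> (i, j) * A i j"
  shows "blockmat B A' = blockmat B A''"
proof -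
  \<comment> \<open>Only the agreement of A' and A'' on P is used: the values of \<sigma>, B \<ge> 0, the rank of X
    and the acyclicity of P are not needed.\<close>
  have "A' i j = A'' i j" if "(i, j) \<in> P" for i j
    using sign' sign'' that by fastforce
  then have "P \<subseteq> {(i, j). A i j \<noteq> 0 \<and> A' i j = A'' i j}"
    using P_path unfolding coordinatizing_path_def graph_edges_def by auto
  then have "connected_in {(i, j). A i j \<noteq> 0 \<and> A' i j = A'' i j} (Inl i) (Inr j)" if "A i j \<noteq> 0" for i j
    using coordinatizing_path_connects[OF P_path that] connected_in_mono by blast
  then have "A' = A''"
    using agree_on_connecting_set_imp_eq[OF B_diag diagonal_entry_nonzero[OF B_diag B_rank] same' same''] by blast
  then show ?thesis by simp
qed

end
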